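(* Let $d\in\mathbb{N}$, let $X$ be a finite subset of $\mathbb{R}^{2^d}\setminus\{0\}$ (a point cloud), and let $d_X$ be the Euclidean metric restricted to $X$. Let $\rho:\mathbb{R}^{2^d}\setminus\{0\}\to\mathcal{S}(\mathbb{C}^{2^d})$ be the amplitude encoding $\rho(x)=\frac{1}{\lVert x\rVert^2}\sum_{i,j=0}^{2^d-1}x_i\overline{x_j}\,|i\rangle\langle j|$, where $\mathcal{S}(\mathbb{C}^{2^d})$ is equipped with the Bures fidelity metric $d_F$, and let $\rho|_X$ be its restriction to $X$. Let $Y=\rho(X)$ with $d_Y$ the restriction of $d_F$ to $Y$. Then: (i) $0\le \mathrm{dis}(\rho|_X)\le \max\{\mathrm{diam}(X,d_X),\mathrm{diam}(Y,d_Y)\}$. Moreover, there exists a point cloud $X$ with $\mathrm{dis}(\rho|_X)=0$; there exists a point cloud $X$ with $\mathrm{dis}(\rho|_X)=\mathrm{diam}(X,d_X)$; and there is a fixed $N\in\mathbb{N}$ such that for every $\epsilon$ with $0<\epsilon<1$ there exists a point cloud $X$ with $\#X=N$ and $\mathrm{dis}(\rho|_X)=\mathrm{diam}(Y,d_Y)-\epsilon$. (ii) $0\le \mathrm{sfdis}(\rho|_X)\le \max\{\mathrm{diam}(X,d_X),\mathrm{diam}(Y,d_Y)\}$. Moreover, there exists a point cloud $X$ with $\mathrm{sfdis}(\rho|_X)=0$ and there exists a point cloud $X$ with $\mathrm{sfdis}(\rho|_X)=\mathrm{diam}(X,d_X)$. (iii) There exists a sequence of finite subsets $X_n\subset\mathbb{R}^{2^d}\setminus\{0\}$,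 each equipped with the Euclidean metric $d_{X_n}$, such that $\#X_n$ is independent of $n$ and $\lim_{n\to\infty}\mathrm{sfdis}(\rho|_{X_n})=\infty$.
   Context: $\mathcal{S}(\mathcal{H})$ denotes the set of density matrices (positive semidefinite, trace one) on a Hilbert space $\mathcal{H}$; $|0\rangle,\dots,|2^d-1\rangle$ is the standard basis of $\mathbb{C}^{2^d}$. The fidelity of $\rho,\sigma\in\mathcal{S}(\mathcal{H})$ is $F(\rho,\sigma)=\big(\mathrm{Tr}\sqrt{\sqrt{\rho}\,\sigma\sqrt{\rho}}\big)^2$ and the Bures fidelity metric is $d_F(\rho,\sigma)=\sqrt{1-\sqrt{F(\rho,\sigma)}}$ (maximum value $1$). For a metric space $(Z,d_Z)$, $\mathrm{diam}(Z,d_Z)=\sup_{z,z'\in Z}d_Z(z,z')$. For metric spaces $(A,d_A)$, $(B,d_B)$ and any function $f:A\to B$, the distortion is $\mathrm{dis}(f)=\sup_{a,a'\in A}|d_A(a,a')-d_B(f(a),f(a'))|$, and the scale-free distortion is $\mathrm{sfdis}(f)=\inf_{\lambda>0}\sup_{a,a'\in A}\big|d_A(a,a')-\tfrac{1}{\lambda}d_B(f(a),f(a'))\big|$. Here $\rho|_X$ is regarded as a map from $(X,d_X)$ to $(\mathcal{S}(\mathbb{C}^{2^d}),d_F)$ (equivalently to $(Y,d_Y)$). *)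

theory Defs
  imports "HOL-Analysis.Analysis" "Jordan_Normal_Form.Matrix"
begin

definition eucl_norm :: "real vec \<Rightarrow> real" where
  "eucl_norm x = sqrt (\<Sum>i<dim_vec x. (x $ i)^2)"

definition eucl_dist :: "real vec \<Rightarrow> real vec \<Rightarrow> real" where
  "eucl_dist x y = sqrt (\<Sum>i<dim_vec x. (x $ i - y $ i)^2)"

definition punctured :: "nat \<Rightarrow> real vec set" where
  "punctured d = {x. dim_vec x = 2^d \<and> x \<noteq> 0\<^sub>v (2^d)}"

definition point_cloud :: "nat \<Rightarrow> real vec set \<Rightarrow> bool" where
  "point_cloud d X \<longleftrightarrow> finite X \<and> X \<subseteq> punctured d"

definition hermitian_mat :: "complex mat \<Rightarrow> bool" where
  "hermitian_mat A \<longleftrightarrow> dim_row A = dim_col A \<and>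
     (\<forall>i<dim_row A. \<forall>j<dim_row A. A $$ (i,j) = cnj (A $$ (j,i)))"

definition psd_mat :: "complex mat \<Rightarrow> bool" where
  "psd_mat A \<longleftrightarrow> hermitian_mat A \<and>
     (\<forall>v \<in> carrier_vec (dim_row A).
        Im ((A *\<^sub>v v) \<bullet>c v) = 0 \<and> Re ((A *\<^sub>v v) \<bullet>c v) \<ge> 0)"

definition mtrace :: "complex mat \<Rightarrow> complex" where
  "mtrace A = (\<Sum>i<dim_row A. A $$ (i,i))"

definition density_mats :: "nat \<Rightarrow> complex mat set" where
  "density_mats n = {A. A \<in> carrier_mat n n \<and> psd_mat A \<and> mtrace A = 1}"

text \<open>The (unique) positive semidefinite square root.\<close>
definition mat_sqrt :: "complex mat \<Rightarrow> complex mat" where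
  "mat_sqrt A = (THE S. S \<in> carrier_mat (dim_row A) (dim_row A) \<and> psd_mat S \<and> S * S = A)"

definition fidelity :: "complex mat \<Rightarrow> complex mat \<Rightarrow> real" where
  "fidelity \<rho> \<sigma> = (Re (mtrace (mat_sqrt (mat_sqrt \<rho> * \<sigma> * mat_sqrt \<rho>))))^2"

definition bures_dist :: "complex mat \<Rightarrow> complex mat \<Rightarrow> real" where
  "bures_dist \<rho> \<sigma> = sqrt (1 - sqrt (fidelity \<rho> \<sigma>))"

definition amp_enc :: "real vec \<Rightarrow> complex mat" where
  "amp_enc x = mat (dim_vec x) (dim_vec x)
     (\<lambda>(i,j). complex_of_real (x $ i) * cnj (complex_of_real (x $ j)) / complex_of_real ((eucl_norm x)^2))"

text \<open>Suprema over finite sets of nonnegative reals; \<open>insert 0\<close> only fixes the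
  value 0 for the empty set (all quantities are nonnegative).\<close>
definition diam_fin :: "'a set \<Rightarrow> ('a \<Rightarrow> 'a \<Rightarrow> real) \<Rightarrow> real" where
  "diam_fin Z dZ = Max (insert 0 {dZ z z' | z z'. z \<in> Z \<and> z' \<in> Z})"

definition distortion :: "'a set \<Rightarrow> ('a \<Rightarrow> 'a \<Rightarrow> real) \<Rightarrow> ('b \<Rightarrow> 'b \<Rightarrow> real) \<Rightarrow> ('a \<Rightarrow> 'b) \<Rightarrow> real" where
  "distortion A dA dB f = Max (insert 0 {\<bar>dA a a' - dB (f a) (f a')\<bar> | a a'. a \<in> A \<and> a' \<in> A})"

definition sf_distortion :: "'a set \<Rightarrow> ('a \<Rightarrow> 'a \<Rightarrow> real) \<Rightarrow> ('b \<Rightarrow> 'b \<Rightarrow> real) \<Rightarrow> ('a \<Rightarrow> 'b) \<Rightarrow> real" where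
  "sf_distortion A dA dB f = (INF l\<in>{0<..}.
     Max (insert 0 {\<bar>dA a a' - dB (f a) (f a') / l\<bar> | a a'. a \<in> A \<and> a' \<in> A}))"

end

theory Submission
  imports Defs
begin

text \<open>
  Write \<open>\<psi>\<^sub>x = x / \<parallel>x\<parallel>\<close>. The amplitude encoding is the rank-one projector
  \<open>\<rho>(x) = |\<psi>\<^sub>x\<rangle>\<langle>\<psi>\<^sub>x|\<close>. A positive semidefinite square root of
  \<open>c |u\<rangle>\<langle>u|\<close> (\<open>u\<close> a unit vector) annihilates \<open>u\<^sup>\<bottom>\<close> and multiplies \<open>u\<close> by \<open>\<surd>c\<close>, so
  \<open>\<surd>\<rho>(x) = \<rho>(x)\<close>, \<open>\<surd>\<rho>(x) \<rho>(y) \<surd>\<rho>(x) = |\<langle>\<psi>\<^sub>y, \<psi>\<^sub>x\<rangle>|\<^sup>2 \<rho>(x)\<close>, and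
  \<open>d\<^sub>F(\<rho>(x), \<rho>(y)) = \<surd>(1 - |\<langle>x, y\<rangle>| / (\<parallel>x\<parallel> \<parallel>y\<parallel>))\<close>. This lies in \<open>[0, 1]\<close>, vanishes
  on parallel vectors and equals 1 on orthogonal ones.

  The bounds in (i) and (ii) hold for any map between nonnegative distance functions
  (\<open>sfdis \<le> dis\<close> by taking \<open>\<lambda> = 1\<close>). All extremal examples are two-point clouds on the
  first standard basis vectors: \<open>{3r/5 e\<^sub>0, 4r/5 e\<^sub>1}\<close> has Euclidean diameter \<open>r\<close>, Bures
  diameter 1 and distortion \<open>|r - 1|\<close>, while \<open>{r e\<^sub>0, 2r e\<^sub>0}\<close> is collapsed to a single state,
  so both of its distortions equal its diameter \<open>r\<close>.
\<close>

(* HOL-Analysis and Jordan_Normal_Form both use $ for vector indexing. *)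
no_notation vec_nth (infixl "$" 90)

lemma cscalar_prod_sum:
  "w \<in> carrier_vec n \<Longrightarrow> v \<bullet>c w = (\<Sum>i<n. v $ i * cnj (w $ i))"
  by (simp add: scalar_prod_def lessThan_atLeast0)

lemma cnj_cscalar_prod:
  "v \<in> carrier_vec n \<Longrightarrow> w \<in> carrier_vec n \<Longrightarrow> cnj (v \<bullet>c w) = w \<bullet>c v"
  by (simp add: cscalar_prod_sum mult.commute)

lemma index_mult_mat_vec_sum:
  "A \<in> carrier_mat n m \<Longrightarrow> v \<in> carrier_vec m \<Longrightarrow> i < n \<Longrightarrow>
    (A *\<^sub>v v) $ i = (\<Sum>j<m. A $$ (i, j) * v $ j)"
  by (simp add: scalar_prod_def lessThan_atLeast0)

lemma eq_vec_of_minus_eq_zero: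
  fixes x y :: "'a :: group_add vec"
  assumes "x - y = 0\<^sub>v n" "x \<in> carrier_vec n" "y \<in> carrier_vec n"
  shows "x = y"
proof (rule eq_vecI)
  fix i assume "i < dim_vec y"
  then have "(x - y) $ i = 0" using assms by simp
  then show "x $ i = y $ i" using \<open>i < dim_vec y\<close> assms(2,3) by simp
qed (use assms in simp)

lemma eq_mat_of_mult_vec_eq:
  fixes A B :: "'a :: comm_ring_1 mat"
  assumes "A \<in> carrier_mat n m" "B \<in> carrier_mat n m"
    and "\<And>v. v \<in> carrier_vec m \<Longrightarrow> A *\<^sub>v v = B *\<^sub>v v"
  shows "A = B"
proof (rule eq_matI)
  fix i j assume "i < dim_row B" "j < dim_col B"
  moreover have "(A *\<^sub>v unit_vec m j) $ i = (B *\<^sub>v unit_vec m j) $ i"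
    using assms(3) by simp
  ultimately show "A $$ (i, j) = B $$ (i, j)" using assms(1,2) by simp
qed (use assms in auto)

lemma hermitian_cscalar_prod_mult_vec:
  assumes S: "S \<in> carrier_mat n n" "hermitian_mat S"
    and v: "v \<in> carrier_vec n" and w: "w \<in> carrier_vec n"
  shows "(S *\<^sub>v v) \<bullet>c w = v \<bullet>c (S *\<^sub>v w)"
proof -
  have herm: "S $$ (i, j) = cnj (S $$ (j, i))" if "i < n" "j < n" for i j
    using S that unfolding hermitian_mat_def by blast
  have "(S *\<^sub>v v) \<bullet>c w = (\<Sum>i<n. (S *\<^sub>v v) $ i * cnj (w $ i))"
    using w by (rule cscalar_prod_sum)
  also have "\<dots> = (\<Sum>i<n. \<Sum>j<n. S $$ (i, j) * v $ j * cnj (w $ i))"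
    using S v by (intro sum.cong refl)
      (simp add: index_mult_mat_vec_sum sum_distrib_right del: index_mult_mat_vec)
  also have "\<dots> = (\<Sum>j<n. \<Sum>i<n. v $ j * (cnj (S $$ (j, i)) * cnj (w $ i)))"
    by (subst sum.swap) (intro sum.cong refl, subst herm, auto)
  also have "\<dots> = (\<Sum>j<n. v $ j * cnj ((S *\<^sub>v w) $ j))"
    using S w by (intro sum.cong refl)
      (simp add: index_mult_mat_vec_sum sum_distrib_left del: index_mult_mat_vec)
  also have "\<dots> = v \<bullet>c (S *\<^sub>v w)"
    using S w by (simp add: cscalar_prod_sum[of "S *\<^sub>v w" n] del: index_mult_mat_vec)
  finally show ?thesis .
qed

definition scaled_proj :: "real \<Rightarrow> complex vec \<Rightarrow> complex mat" where
  "scaled_proj r u = mat (dim_vec u) (dim_vec u) (\<lambda>(i, j). of_real r * (u $ i * cnj (u $ j)))"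

lemma scaled_proj_carrier [simp]: "u \<in> carrier_vec n \<Longrightarrow> scaled_proj r u \<in> carrier_mat n n"
  by (simp add: scaled_proj_def)

lemma scaled_proj_mult_vec:
  assumes u: "u \<in> carrier_vec n" and v: "v \<in> carrier_vec n"
  shows "scaled_proj r u *\<^sub>v v = (of_real r * (v \<bullet>c u)) \<cdot>\<^sub>v u"
proof (rule eq_vecI)
  fix i assume "i < dim_vec ((of_real r * (v \<bullet>c u)) \<cdot>\<^sub>v u)"
  then have i: "i < n" using u by simp
  have "(scaled_proj r u *\<^sub>v v) $ i = (\<Sum>j<n. of_real r * (u $ i * cnj (u $ j)) * v $ j)"
    using u v i by (simp add: scaled_proj_def scalar_prod_def lessThan_atLeast0)
  also have "\<dots> = (of_real r * (v \<bullet>c u)) * u $ i"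
    using u by (simp add: cscalar_prod_sum sum_distrib_left sum_distrib_right mult_ac)
  finally show "(scaled_proj r u *\<^sub>v v) $ i = ((of_real r * (v \<bullet>c u)) \<cdot>\<^sub>v u) $ i"
    using i u by simp
qed (use u v in \<open>simp add: scaled_proj_def\<close>)

lemma scaled_proj_quadratic_form:
  assumes u: "u \<in> carrier_vec n" and v: "v \<in> carrier_vec n"
  shows "(scaled_proj r u *\<^sub>v v) \<bullet>c v = of_real (r * (cmod (v \<bullet>c u))\<^sup>2)"
proof -
  have "(scaled_proj r u *\<^sub>v v) \<bullet>c v = of_real r * ((v \<bullet>c u) * cnj (v \<bullet>c u))"
    using u v by (simp add: scaled_proj_mult_vec cnj_cscalar_prod)
  then show ?thesis by (simp add: complex_norm_square[symmetric])
qed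

lemma psd_scaled_proj:
  assumes u: "u \<in> carrier_vec n" and r: "0 \<le> r"
  shows "psd_mat (scaled_proj r u)"
proof -
  have "hermitian_mat (scaled_proj r u)"
    unfolding hermitian_mat_def by (simp add: scaled_proj_def mult_ac)
  moreover have "dim_row (scaled_proj r u) = n"
    using u by (simp add: scaled_proj_def)
  ultimately show ?thesis
    using u r unfolding psd_mat_def by (simp add: scaled_proj_quadratic_form)
qed

lemma scaled_proj_mult:
  assumes u: "u \<in> carrier_vec n" "u \<bullet>c u = 1"
  shows "scaled_proj r u * scaled_proj s u = scaled_proj (r * s) u"
proof (rule eq_mat_of_mult_vec_eq[of _ n n])
  fix v :: "complex vec" assume v: "v \<in> carrier_vec n"
  have "scaled_proj r u * scaled_proj s u *\<^sub>v v = scaled_proj r u *\<^sub>v (scaled_proj s u *\<^sub>v v)"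
    using u v by (simp add: assoc_mult_mat_vec[of _ n n _ n])
  then show "scaled_proj r u * scaled_proj s u *\<^sub>v v = scaled_proj (r * s) u *\<^sub>v v"
    using u v by (simp add: scaled_proj_mult_vec mult.assoc)
qed (use u in \<open>auto intro!: mult_carrier_mat[of _ n n]\<close>)

lemma scaled_proj_sandwich:
  assumes u: "u \<in> carrier_vec n" and w: "w \<in> carrier_vec n"
  shows "scaled_proj 1 u * scaled_proj 1 w * scaled_proj 1 u = scaled_proj ((cmod (w \<bullet>c u))\<^sup>2) u"
proof (rule eq_mat_of_mult_vec_eq[of _ n n])
  fix v :: "complex vec" assume v: "v \<in> carrier_vec n"
  let ?P = "scaled_proj 1 u" and ?Q = "scaled_proj 1 w"
  have P: "?P \<in> carrier_mat n n" and Q: "?Q \<in> carrier_mat n n"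
    using u w by simp_all
  have "?P * ?Q * ?P *\<^sub>v v = ?P *\<^sub>v (?Q *\<^sub>v (?P *\<^sub>v v))"
    using assoc_mult_mat_vec[OF mult_carrier_mat[OF P Q] P v] assoc_mult_mat_vec[OF P Q] P v
    by simp
  also have "\<dots> = ((v \<bullet>c u) * ((u \<bullet>c w) * (w \<bullet>c u))) \<cdot>\<^sub>v u"
    using u w v by (simp add: scaled_proj_mult_vec mult_ac)
  also have "(u \<bullet>c w) * (w \<bullet>c u) = of_real ((cmod (w \<bullet>c u))\<^sup>2)"
    using u w by (simp flip: cnj_cscalar_prod[OF w u] add: complex_norm_square[symmetric] mult.commute)
  finally show "?P * ?Q * ?P *\<^sub>v v = scaled_proj ((cmod (w \<bullet>c u))\<^sup>2) u *\<^sub>v v"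
    using u v by (simp add: scaled_proj_mult_vec mult.commute)
qed (use u w in \<open>auto intro!: mult_carrier_mat[of _ n n]\<close>)

lemma mtrace_scaled_proj: "mtrace (scaled_proj r u) = of_real r * (u \<bullet>c u)"
  by (simp add: mtrace_def scaled_proj_def cscalar_prod_sum[of u "dim_vec u"] sum_distrib_left)

lemma cscalar_prod_minus_proj_eq_0:
  fixes u v :: "complex vec"
  assumes u: "u \<in> carrier_vec n" "u \<bullet>c u = 1" and v: "v \<in> carrier_vec n"
  shows "(v - (v \<bullet>c u) \<cdot>\<^sub>v u) \<bullet>c u = 0"
  using u v by (simp add: minus_scalar_prod_distrib[of _ n])

lemma hermitian_root_scaled_proj_kernel:
  assumes S: "S \<in> carrier_mat n n" "hermitian_mat S" and SS: "S * S = scaled_proj c u"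
    and u: "u \<in> carrier_vec n" and v: "v \<in> carrier_vec n" "v \<bullet>c u = 0"
  shows "S *\<^sub>v v = 0\<^sub>v n"
proof -
  have "(S *\<^sub>v v) \<bullet>c (S *\<^sub>v v) = v \<bullet>c (S *\<^sub>v (S *\<^sub>v v))"
    using S v by (intro hermitian_cscalar_prod_mult_vec) auto
  also have "\<dots> = v \<bullet>c ((S * S) *\<^sub>v v)"
    using S v by (simp add: assoc_mult_mat_vec[of _ n n _ n])
  also have "\<dots> = 0"
    using SS u v by (simp add: scaled_proj_mult_vec conjugate_smult_vec)
  finally show ?thesis
    using S v conjugate_square_eq_0_vec[of "S *\<^sub>v v" n] by simp
qed

lemma hermitian_root_scaled_proj_eigvec:
  assumes S: "S \<in> carrier_mat n n" "hermitian_mat S" and SS: "S * S = scaled_proj c u"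
    and u: "u \<in> carrier_vec n" "u \<bullet>c u = 1"
  shows "S *\<^sub>v u = ((S *\<^sub>v u) \<bullet>c u) \<cdot>\<^sub>v u"
proof -
  define k where "k = (S *\<^sub>v u) \<bullet>c u"
  define z where "z = S *\<^sub>v u - k \<cdot>\<^sub>v u"
  have Su: "S *\<^sub>v u \<in> carrier_vec n" using S u by simp
  have z: "z \<in> carrier_vec n" using Su u by (simp add: z_def)
  have zu: "z \<bullet>c u = 0"
    unfolding z_def k_def using u Su by (rule cscalar_prod_minus_proj_eq_0)
  have Sz: "S *\<^sub>v z = 0\<^sub>v n"
    using hermitian_root_scaled_proj_kernel[OF S SS u(1) z zu] .
  have "z \<bullet>c z = (S *\<^sub>v u) \<bullet>c z - k * (u \<bullet>c z)"
    using Su u z by (subst (1) z_def) (simp add: minus_scalar_prod_distrib[of _ n])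
  also have "(S *\<^sub>v u) \<bullet>c z = u \<bullet>c (S *\<^sub>v z)"
    using S u(1) z by (rule hermitian_cscalar_prod_mult_vec)
  also have "u \<bullet>c z = cnj (z \<bullet>c u)"
    using u z by (simp add: cnj_cscalar_prod)
  finally have "z \<bullet>c z = 0"
    using u Sz zu by simp
  then have "S *\<^sub>v u - k \<cdot>\<^sub>v u = 0\<^sub>v n"
    using conjugate_square_eq_0_vec[OF z] unfolding z_def by blast
  then have "S *\<^sub>v u = k \<cdot>\<^sub>v u"
    by (rule eq_vec_of_minus_eq_zero) (use Su u(1) in simp_all)
  then show ?thesis
    unfolding k_def .
qed

lemma psd_root_scaled_proj_eigval:
  assumes u: "u \<in> carrier_vec n" "u \<bullet>c u = 1" and S: "S \<in> carrier_mat n n" "psd_mat S"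
    and SS: "S * S = scaled_proj c u"
  shows "S *\<^sub>v u = of_real (sqrt c) \<cdot>\<^sub>v u"
proof -
  define k where "k = (S *\<^sub>v u) \<bullet>c u"
  have "hermitian_mat S" using S(2) unfolding psd_mat_def by blast
  then have Su: "S *\<^sub>v u = k \<cdot>\<^sub>v u"
    unfolding k_def using hermitian_root_scaled_proj_eigvec[OF S(1) _ SS u] by blast
  have "Im k = 0" "0 \<le> Re k"
    using S u unfolding psd_mat_def k_def by auto
  then have k_real: "k = of_real (Re k)" by (simp add: complex_eq_iff)
  have "(k * k) \<cdot>\<^sub>v u = (S * S) *\<^sub>v u"
    using S u
    by (simp add: Su assoc_mult_mat_vec[of _ n n _ n] mult_mat_vec[of _ n n] smult_smult_assoc)
  also have "\<dots> = of_real c \<cdot>\<^sub>v u"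
    using SS u by (simp add: scaled_proj_mult_vec)
  finally have "((k * k) \<cdot>\<^sub>v u) \<bullet>c u = (of_real c \<cdot>\<^sub>v u) \<bullet>c u"
    by simp
  then have "k * k = of_real c"
    using u by (simp add: smult_scalar_prod_distrib[of _ n])
  then have "(Re k)\<^sup>2 = c"
    using k_real by (metis of_real_eq_iff of_real_mult power2_eq_square)
  then have "Re k = sqrt c"
    using real_sqrt_unique \<open>0 \<le> Re k\<close> by metis
  then show ?thesis
    using Su k_real by simp
qed

lemma psd_root_scaled_proj_unique:
  assumes u: "u \<in> carrier_vec n" "u \<bullet>c u = 1" and S: "S \<in> carrier_mat n n" "psd_mat S"
    and SS: "S * S = scaled_proj c u"
  shows "S = scaled_proj (sqrt c) u"
proof (rule eq_mat_of_mult_vec_eq[of _ n n])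
  fix v :: "complex vec" assume v: "v \<in> carrier_vec n"
  have "hermitian_mat S" using S(2) unfolding psd_mat_def by blast
  then have "S *\<^sub>v (v - (v \<bullet>c u) \<cdot>\<^sub>v u) = 0\<^sub>v n"
    using S u v SS
    by (intro hermitian_root_scaled_proj_kernel[of S n c u]) (auto intro: cscalar_prod_minus_proj_eq_0)
  then have "S *\<^sub>v v - (v \<bullet>c u * of_real (sqrt c)) \<cdot>\<^sub>v u = 0\<^sub>v n"
    using S u v
    by (simp add: mult_minus_distrib_mat_vec[of _ n n] mult_mat_vec[of _ n n] smult_smult_assoc
        psd_root_scaled_proj_eigval[OF u S SS])
  then have "S *\<^sub>v v = (v \<bullet>c u * of_real (sqrt c)) \<cdot>\<^sub>v u"
    by (rule eq_vec_of_minus_eq_zero) (use S u v in simp_all)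
  then show "S *\<^sub>v v = scaled_proj (sqrt c) u *\<^sub>v v"
    using u v by (simp add: scaled_proj_mult_vec mult.commute)
qed (use S u in auto)

lemma mat_sqrt_scaled_proj:
  assumes u: "u \<in> carrier_vec n" "u \<bullet>c u = 1" and c: "0 \<le> c"
  shows "mat_sqrt (scaled_proj c u) = scaled_proj (sqrt c) u"
proof -
  have "dim_row (scaled_proj c u) = n" using u by (simp add: scaled_proj_def)
  then show ?thesis
    unfolding mat_sqrt_def using u c psd_root_scaled_proj_unique[OF u]
    by (intro the_equality) (auto simp: psd_scaled_proj scaled_proj_mult)
qed

definition amp_state :: "real vec \<Rightarrow> complex vec" where
  "amp_state x = vec (dim_vec x) (\<lambda>i. of_real (x $ i / eucl_norm x))"

lemma amp_state_carrier [simp]: "amp_state x \<in> carrier_vec (dim_vec x)"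
  by (simp add: amp_state_def)

lemma amp_enc_eq_scaled_proj: "amp_enc x = scaled_proj 1 (amp_state x)"
  by (rule eq_matI) (auto simp: amp_enc_def scaled_proj_def amp_state_def power2_eq_square)

lemma eucl_norm_pos:
  assumes "x \<noteq> 0\<^sub>v (dim_vec x)"
  shows "0 < eucl_norm x"
proof -
  obtain i where i: "i < dim_vec x" "x $ i \<noteq> 0"
    using assms by (metis eq_vecI index_zero_vec)
  have "0 < (x $ i)\<^sup>2" using i by simp
  also have "\<dots> \<le> (\<Sum>j<dim_vec x. (x $ j)\<^sup>2)"
    by (rule member_le_sum) (use i in auto)
  finally show ?thesis unfolding eucl_norm_def by simp
qed

lemma eucl_norm_pos_punctured: "x \<in> punctured d \<Longrightarrow> 0 < eucl_norm x"
  unfolding punctured_def by (auto intro: eucl_norm_pos)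

lemma inner_self_eq_eucl_norm_square: "(\<Sum>i<dim_vec x. x $ i * x $ i) = (eucl_norm x)\<^sup>2"
  unfolding eucl_norm_def by (simp add: sum_nonneg power2_eq_square)

lemma abs_inner_le_eucl_norm_mult:
  assumes "dim_vec y = dim_vec x"
  shows "\<bar>\<Sum>i<dim_vec x. x $ i * y $ i\<bar> \<le> eucl_norm x * eucl_norm y"
proof -
  have "\<bar>\<Sum>i<dim_vec x. x $ i * y $ i\<bar> \<le> (\<Sum>i<dim_vec x. \<bar>x $ i\<bar> * \<bar>y $ i\<bar>)"
    using sum_abs[of "\<lambda>i. x $ i * y $ i"] by (simp add: abs_mult)
  also have "\<dots> \<le> L2_set (\<lambda>i. x $ i) {..<dim_vec x} * L2_set (\<lambda>i. y $ i) {..<dim_vec x}"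
    by (rule L2_set_mult_ineq)
  also have "\<dots> = eucl_norm x * eucl_norm y"
    using assms by (simp add: L2_set_def eucl_norm_def)
  finally show ?thesis .
qed

lemma amp_state_cscalar_prod:
  assumes "dim_vec y = dim_vec x"
  shows "amp_state x \<bullet>c amp_state y
    = of_real ((\<Sum>i<dim_vec x. x $ i * y $ i) / (eucl_norm x * eucl_norm y))"
proof -
  have "amp_state x \<bullet>c amp_state y = (\<Sum>i<dim_vec x. amp_state x $ i * cnj (amp_state y $ i))"
    using assms amp_state_carrier[of y] by (intro cscalar_prod_sum) simp
  also have "\<dots> = (\<Sum>i<dim_vec x. of_real (x $ i * y $ i / (eucl_norm x * eucl_norm y)))"
    using assms by (intro sum.cong refl) (simp add: amp_state_def)
  also have "\<dots> = of_real ((\<Sum>i<dim_vec x. x $ i * y $ i) / (eucl_norm x * eucl_norm y))"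
    by (simp only: of_real_sum[symmetric] sum_divide_distrib)
  finally show ?thesis .
qed

lemma amp_state_unit:
  assumes "0 < eucl_norm x"
  shows "amp_state x \<bullet>c amp_state x = 1"
  using assms unfolding amp_state_cscalar_prod[OF refl] inner_self_eq_eucl_norm_square
  by (simp add: power2_eq_square)

lemma bures_dist_amp_enc:
  assumes dim: "dim_vec y = dim_vec x" and x: "0 < eucl_norm x" and y: "0 < eucl_norm y"
  shows "bures_dist (amp_enc x) (amp_enc y)
    = sqrt (1 - \<bar>\<Sum>i<dim_vec x. x $ i * y $ i\<bar> / (eucl_norm x * eucl_norm y))"
proof -
  let ?u = "amp_state x" and ?w = "amp_state y"
  define c where "c = cmod (?w \<bullet>c ?u)"
  have u: "?u \<in> carrier_vec (dim_vec x)" "?u \<bullet>c ?u = 1"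
    using x by (simp_all add: amp_state_unit)
  have w: "?w \<in> carrier_vec (dim_vec x)"
    using dim amp_state_carrier[of y] by simp
  have "?w \<bullet>c ?u = cnj (?u \<bullet>c ?w)"
    using u(1) w by (rule cnj_cscalar_prod[symmetric])
  also have "\<dots> = of_real ((\<Sum>i<dim_vec x. x $ i * y $ i) / (eucl_norm x * eucl_norm y))"
    by (simp only: amp_state_cscalar_prod[OF dim] complex_cnj_complex_of_real)
  finally have c: "c = \<bar>\<Sum>i<dim_vec x. x $ i * y $ i\<bar> / (eucl_norm x * eucl_norm y)"
    using x y by (simp only: c_def norm_of_real abs_divide abs_mult abs_of_pos)
  have sqrt_x: "mat_sqrt (scaled_proj 1 ?u) = scaled_proj 1 ?u"
    using mat_sqrt_scaled_proj[OF u, of 1] by simp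
  have "mat_sqrt (amp_enc x) * amp_enc y * mat_sqrt (amp_enc x) = scaled_proj (c\<^sup>2) ?u"
    unfolding sqrt_x amp_enc_eq_scaled_proj c_def by (rule scaled_proj_sandwich[OF u(1) w])
  moreover have "mat_sqrt (scaled_proj (c\<^sup>2) ?u) = scaled_proj c ?u"
    using mat_sqrt_scaled_proj[OF u, of "c\<^sup>2"] by (simp add: c_def)
  ultimately have "fidelity (amp_enc x) (amp_enc y) = c\<^sup>2"
    using u(2) by (simp add: fidelity_def mtrace_scaled_proj)
  then show ?thesis
    unfolding bures_dist_def c[symmetric] by (simp add: c_def)
qed

lemma bures_dist_amp_enc_nonneg:
  assumes dim: "dim_vec y = dim_vec x" and x: "0 < eucl_norm x" and y: "0 < eucl_norm y"
  shows "0 \<le> bures_dist (amp_enc x) (amp_enc y)"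
proof -
  have "\<bar>\<Sum>i<dim_vec x. x $ i * y $ i\<bar> / (eucl_norm x * eucl_norm y) \<le> 1"
    using abs_inner_le_eucl_norm_mult[OF dim] x y by simp
  then show ?thesis
    unfolding bures_dist_amp_enc[OF dim x y] by simp
qed

lemma bures_dist_amp_enc_self:
  assumes "0 < eucl_norm x"
  shows "bures_dist (amp_enc x) (amp_enc x) = 0"
  using assms unfolding bures_dist_amp_enc[OF refl assms assms] inner_self_eq_eucl_norm_square
  by (simp add: power2_eq_square)

lemma bures_dist_amp_enc_commute:
  assumes dim: "dim_vec y = dim_vec x" and x: "0 < eucl_norm x" and y: "0 < eucl_norm y"
  shows "bures_dist (amp_enc y) (amp_enc x) = bures_dist (amp_enc x) (amp_enc y)"
  unfolding bures_dist_amp_enc[OF dim x y] bures_dist_amp_enc[OF dim[symmetric] y x]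
  using dim by (simp add: mult.commute)

lemma eucl_dist_nonneg: "0 \<le> eucl_dist x y"
  unfolding eucl_dist_def by (simp add: sum_nonneg)

lemma eucl_dist_self: "eucl_dist x x = 0"
  by (simp add: eucl_dist_def)

lemma eucl_dist_commute: "dim_vec y = dim_vec x \<Longrightarrow> eucl_dist y x = eucl_dist x y"
  by (simp add: eucl_dist_def power2_commute)

lemma finite_pair_image: "finite X \<Longrightarrow> finite {g a a' | a a'. a \<in> X \<and> a' \<in> X}"
  using finite_image_set2[of "\<lambda>a. a \<in> X" "\<lambda>a. a \<in> X" g] by simp

lemma pair_image_doubleton:
  "{g a a' | a a'. a \<in> {p, q} \<and> a' \<in> {p, q}} = {g p p, g p q, g q p, g q q}"
  by auto

lemma diam_fin_ge: "finite X \<Longrightarrow> a \<in> X \<Longrightarrow> a' \<in> X \<Longrightarrow> d a a' \<le> diam_fin X d"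
  unfolding diam_fin_def by (rule Max_ge) (auto intro: finite_pair_image)

lemma diam_fin_nonneg: "finite X \<Longrightarrow> 0 \<le> diam_fin X d"
  unfolding diam_fin_def by (rule Max_ge) (auto intro: finite_pair_image)

lemma distortion_nonneg: "finite X \<Longrightarrow> 0 \<le> distortion X dA dB f"
  unfolding distortion_def by (rule Max_ge) (auto intro: finite_pair_image)

lemma distortion_le_max_diam:
  assumes X: "finite X"
    and dA: "\<And>a a'. a \<in> X \<Longrightarrow> a' \<in> X \<Longrightarrow> 0 \<le> dA a a'"
    and dB: "\<And>a a'. a \<in> X \<Longrightarrow> a' \<in> X \<Longrightarrow> 0 \<le> dB (f a) (f a')"
  shows "distortion X dA dB f \<le> max (diam_fin X dA) (diam_fin (f ` X) dB)"
  unfolding distortion_def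
proof (rule Max.boundedI)
  fix t assume "t \<in> insert 0 {\<bar>dA a a' - dB (f a) (f a')\<bar> | a a'. a \<in> X \<and> a' \<in> X}"
  then consider "t = 0" | a a' where "a \<in> X" "a' \<in> X" "t = \<bar>dA a a' - dB (f a) (f a')\<bar>"
    by blast
  then show "t \<le> max (diam_fin X dA) (diam_fin (f ` X) dB)"
  proof cases
    case 1
    then show ?thesis using diam_fin_nonneg[OF X] by (simp add: le_max_iff_disj)
  next
    case 2
    have "dA a a' \<le> diam_fin X dA" "dB (f a) (f a') \<le> diam_fin (f ` X) dB"
      using 2 X by (auto intro: diam_fin_ge)
    moreover have "0 \<le> dA a a'" "0 \<le> dB (f a) (f a')"
      using 2 dA dB by auto
    ultimately show ?thesis
      unfolding 2(3) by (simp add: abs_le_iff le_max_iff_disj, linarith)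
  qed
qed (use X in \<open>auto intro: finite_pair_image\<close>)

lemma sf_distortion_nonneg_le_distortion:
  assumes "finite X"
  shows "0 \<le> sf_distortion X dA dB f \<and> sf_distortion X dA dB f \<le> distortion X dA dB f"
proof -
  let ?g = "\<lambda>l. Max (insert 0 {\<bar>dA a a' - dB (f a) (f a') / l\<bar> | a a'. a \<in> X \<and> a' \<in> X})"
  have g: "0 \<le> ?g l" for l
    by (rule Max_ge) (use assms in \<open>auto intro: finite_pair_image\<close>)
  have "0 \<le> (INF l\<in>{0<..}. ?g l)"
    by (rule cINF_greatest) (use g in auto)
  moreover have "(INF l\<in>{0<..}. ?g l) \<le> ?g 1"
    by (rule cINF_lower) (use g in \<open>auto intro: bdd_belowI[of _ 0]\<close>)
  ultimately show ?thesis
    unfolding sf_distortion_def distortion_def by simp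
qed

lemma distortion_doubleton:
  assumes "dA p p = 0" "dA q q = 0" "dA q p = dA p q"
    and "dB (f p) (f p) = 0" "dB (f q) (f q) = 0" "dB (f q) (f p) = dB (f p) (f q)"
  shows "distortion {p, q} dA dB f = \<bar>dA p q - dB (f p) (f q)\<bar>"
  unfolding distortion_def pair_image_doubleton using assms by simp

lemma sf_distortion_doubleton:
  assumes "dA p p = 0" "dA q q = 0" "dA q p = dA p q"
    and "dB (f p) (f p) = 0" "dB (f q) (f q) = 0" "dB (f q) (f p) = dB (f p) (f q)"
  shows "sf_distortion {p, q} dA dB f = (INF l\<in>{0<..}. \<bar>dA p q - dB (f p) (f q) / l\<bar>)"
  unfolding sf_distortion_def pair_image_doubleton using assms by simp

lemma diam_fin_doubleton:
  assumes "d p p = 0" "d q q = 0" "d q p = d p q" "0 \<le> d p q"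
  shows "diam_fin {p, q} d = d p q"
  unfolding diam_fin_def pair_image_doubleton using assms by simp

lemma point_cloud_distortion_bounds:
  assumes "point_cloud d X"
  shows "0 \<le> distortion X eucl_dist bures_dist amp_enc \<and>
    distortion X eucl_dist bures_dist amp_enc
      \<le> max (diam_fin X eucl_dist) (diam_fin (amp_enc ` X) bures_dist)"
proof -
  have fin: "finite X" and X: "X \<subseteq> punctured d"
    using assms unfolding point_cloud_def by auto
  have bures: "0 \<le> bures_dist (amp_enc a) (amp_enc a')" if "a \<in> X" "a' \<in> X" for a a'
  proof (rule bures_dist_amp_enc_nonneg)
    have "a \<in> punctured d" "a' \<in> punctured d" using that X by auto
    then show "dim_vec a' = dim_vec a" by (simp add: punctured_def)
    show "0 < eucl_norm a" "0 < eucl_norm a'"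
      using that X by (auto intro: eucl_norm_pos_punctured)
  qed
  show ?thesis
    using distortion_nonneg[OF fin] distortion_le_max_diam[of X eucl_dist bures_dist amp_enc]
      fin eucl_dist_nonneg bures by simp
qed

lemma point_cloud_sf_distortion_bounds:
  assumes "point_cloud d X"
  shows "0 \<le> sf_distortion X eucl_dist bures_dist amp_enc \<and>
    sf_distortion X eucl_dist bures_dist amp_enc
      \<le> max (diam_fin X eucl_dist) (diam_fin (amp_enc ` X) bures_dist)"
proof -
  have "finite X" using assms unfolding point_cloud_def by simp
  then show ?thesis
    using sf_distortion_nonneg_le_distortion point_cloud_distortion_bounds[OF assms]
    by (blast intro: order_trans)
qed

lemma distortion_amp_enc_doubleton:
  assumes "p \<in> punctured d" "q \<in> punctured d"
  shows "distortion {p, q} eucl_dist bures_dist amp_enc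
    = \<bar>eucl_dist p q - bures_dist (amp_enc p) (amp_enc q)\<bar>"
  using assms
  by (intro distortion_doubleton)
    (auto simp: eucl_dist_self eucl_dist_commute punctured_def eucl_norm_pos_punctured
      bures_dist_amp_enc_self bures_dist_amp_enc_commute)

lemma sf_distortion_amp_enc_doubleton:
  assumes "p \<in> punctured d" "q \<in> punctured d"
  shows "sf_distortion {p, q} eucl_dist bures_dist amp_enc
    = (INF l\<in>{0<..}. \<bar>eucl_dist p q - bures_dist (amp_enc p) (amp_enc q) / l\<bar>)"
  using assms
  by (intro sf_distortion_doubleton)
    (auto simp: eucl_dist_self eucl_dist_commute punctured_def eucl_norm_pos_punctured
      bures_dist_amp_enc_self bures_dist_amp_enc_commute)

lemma diam_fin_amp_enc_doubleton:
  assumes "p \<in> punctured d" "q \<in> punctured d"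
  shows "diam_fin (amp_enc ` {p, q}) bures_dist = bures_dist (amp_enc p) (amp_enc q)"
  using assms unfolding image_insert image_empty
  by (intro diam_fin_doubleton)
    (auto simp: punctured_def eucl_norm_pos_punctured bures_dist_amp_enc_self
      bures_dist_amp_enc_commute bures_dist_amp_enc_nonneg)

lemma diam_fin_eucl_doubleton:
  "dim_vec q = dim_vec p \<Longrightarrow> diam_fin {p, q} eucl_dist = eucl_dist p q"
  by (intro diam_fin_doubleton) (simp_all add: eucl_dist_self eucl_dist_commute eucl_dist_nonneg)

lemma smult_unit_vec_punctured:
  assumes "k < 2 ^ d" "a \<noteq> 0"
  shows "a \<cdot>\<^sub>v unit_vec (2 ^ d) k \<in> punctured d"
proof -
  have "(a \<cdot>\<^sub>v unit_vec (2 ^ d) k) $ k \<noteq> 0\<^sub>v (2 ^ d) $ k"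
    using assms by simp
  then show ?thesis
    unfolding punctured_def by auto
qed

lemma eucl_dist_smult_unit_vec:
  assumes "k < n" "l < n"
  shows "eucl_dist (a \<cdot>\<^sub>v unit_vec n k) (b \<cdot>\<^sub>v unit_vec n l)
    = (if k = l then \<bar>a - b\<bar> else sqrt (a\<^sup>2 + b\<^sup>2))"
proof -
  have "(\<Sum>i<n. ((a \<cdot>\<^sub>v unit_vec n k) $ i - (b \<cdot>\<^sub>v unit_vec n l) $ i)\<^sup>2)
      = (\<Sum>i<n. (if i = k then a\<^sup>2 else 0) + (if i = l then b\<^sup>2 else 0)
           - (if k = l \<and> i = k then 2 * a * b else 0))"
    using assms by (intro sum.cong refl) (auto simp: power2_diff)
  also have "\<dots> = (if k = l then (a - b)\<^sup>2 else a\<^sup>2 + b\<^sup>2)"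
    using assms by (simp add: sum.distrib sum_subtractf power2_diff)
  finally show ?thesis
    unfolding eucl_dist_def by simp
qed

lemma inner_smult_unit_vec:
  fixes a b :: real
  assumes "k < n" "l < n"
  shows "(\<Sum>i<dim_vec (a \<cdot>\<^sub>v unit_vec n k). (a \<cdot>\<^sub>v unit_vec n k) $ i * (b \<cdot>\<^sub>v unit_vec n l) $ i)
    = (if k = l then a * b else 0)"
proof -
  have "(\<Sum>i<n. (a \<cdot>\<^sub>v unit_vec n k) $ i * (b \<cdot>\<^sub>v unit_vec n l) $ i)
      = (\<Sum>i<n. if k = l \<and> i = k then a * b else 0)"
    using assms by (intro sum.cong refl) auto
  then show ?thesis
    using assms by simp
qed

lemma eucl_norm_smult_unit_vec: "k < n \<Longrightarrow> eucl_norm (a \<cdot>\<^sub>v unit_vec n k) = \<bar>a\<bar>"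
  using eucl_dist_smult_unit_vec[of k n k a 0] by (simp add: eucl_dist_def eucl_norm_def)

lemma bures_dist_amp_enc_smult_unit_vec:
  assumes "k < n" "l < n" "a \<noteq> 0" "b \<noteq> 0"
  shows "bures_dist (amp_enc (a \<cdot>\<^sub>v unit_vec n k)) (amp_enc (b \<cdot>\<^sub>v unit_vec n l))
    = (if k = l then 0 else 1)"
proof -
  let ?x = "a \<cdot>\<^sub>v unit_vec n k" and ?y = "b \<cdot>\<^sub>v unit_vec n l"
  have "bures_dist (amp_enc ?x) (amp_enc ?y)
      = sqrt (1 - \<bar>\<Sum>i<dim_vec ?x. ?x $ i * ?y $ i\<bar> / (eucl_norm ?x * eucl_norm ?y))"
    using assms by (intro bures_dist_amp_enc) (simp_all add: eucl_norm_smult_unit_vec)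
  also have "\<dots> = (if k = l then 0 else 1)"
    using assms by (simp only: inner_smult_unit_vec eucl_norm_smult_unit_vec) (simp add: abs_mult)
  finally show ?thesis .
qed

lemma point_cloud_smult_unit_vec_pair:
  "k < 2 ^ d \<Longrightarrow> l < 2 ^ d \<Longrightarrow> a \<noteq> 0 \<Longrightarrow> b \<noteq> 0
    \<Longrightarrow> point_cloud d {a \<cdot>\<^sub>v unit_vec (2 ^ d) k, b \<cdot>\<^sub>v unit_vec (2 ^ d) l}"
  unfolding point_cloud_def by (simp add: smult_unit_vec_punctured)

lemma card_smult_unit_vec_pair:
  fixes a b :: real
  assumes "k < n" "l < n" "a \<noteq> 0" "k \<noteq> l \<or> a \<noteq> b"
  shows "card {a \<cdot>\<^sub>v unit_vec n k, b \<cdot>\<^sub>v unit_vec n l} = 2"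
proof -
  have "(a \<cdot>\<^sub>v unit_vec n k) $ k \<noteq> (b \<cdot>\<^sub>v unit_vec n l) $ k"
    using assms by auto
  then have "a \<cdot>\<^sub>v unit_vec n k \<noteq> b \<cdot>\<^sub>v unit_vec n l" by metis
  then show ?thesis by simp
qed

lemma distortion_orthogonal_pair:
  assumes "k < 2 ^ d" "l < 2 ^ d" "k \<noteq> l" "a \<noteq> 0" "b \<noteq> 0"
  shows "distortion {a \<cdot>\<^sub>v unit_vec (2 ^ d) k, b \<cdot>\<^sub>v unit_vec (2 ^ d) l} eucl_dist bures_dist amp_enc
    = \<bar>sqrt (a\<^sup>2 + b\<^sup>2) - 1\<bar>"
  using assms
  by (simp add: distortion_amp_enc_doubleton[of _ d] smult_unit_vec_punctured
      eucl_dist_smult_unit_vec bures_dist_amp_enc_smult_unit_vec)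

lemma diam_fin_amp_enc_orthogonal_pair:
  assumes "k < 2 ^ d" "l < 2 ^ d" "k \<noteq> l" "a \<noteq> 0" "b \<noteq> 0"
  shows "diam_fin (amp_enc ` {a \<cdot>\<^sub>v unit_vec (2 ^ d) k, b \<cdot>\<^sub>v unit_vec (2 ^ d) l}) bures_dist = 1"
  using assms
  by (subst diam_fin_amp_enc_doubleton[of _ d])
    (simp_all add: smult_unit_vec_punctured bures_dist_amp_enc_smult_unit_vec)

lemma distortion_parallel_pair:
  assumes "k < 2 ^ d" "a \<noteq> 0" "b \<noteq> 0"
  shows "distortion {a \<cdot>\<^sub>v unit_vec (2 ^ d) k, b \<cdot>\<^sub>v unit_vec (2 ^ d) k} eucl_dist bures_dist amp_enc
    = \<bar>a - b\<bar>"
  using assms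
  by (simp add: distortion_amp_enc_doubleton[of _ d] smult_unit_vec_punctured
      eucl_dist_smult_unit_vec bures_dist_amp_enc_smult_unit_vec)

lemma sf_distortion_parallel_pair:
  assumes "k < 2 ^ d" "a \<noteq> 0" "b \<noteq> 0"
  shows "sf_distortion {a \<cdot>\<^sub>v unit_vec (2 ^ d) k, b \<cdot>\<^sub>v unit_vec (2 ^ d) k} eucl_dist bures_dist amp_enc
    = \<bar>a - b\<bar>"
  using assms
  by (simp add: sf_distortion_amp_enc_doubleton[of _ d] smult_unit_vec_punctured
      eucl_dist_smult_unit_vec bures_dist_amp_enc_smult_unit_vec)

lemma diam_fin_parallel_pair:
  "k < n \<Longrightarrow> diam_fin {a \<cdot>\<^sub>v unit_vec n k, b \<cdot>\<^sub>v unit_vec n k} eucl_dist = \<bar>a - b\<bar>"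
  by (simp add: diam_fin_eucl_doubleton eucl_dist_smult_unit_vec)

lemma orthogonal_pair_cloud:
  fixes r :: real
  assumes "1 \<le> d" "0 < r"
  defines "X \<equiv> {(3 * r / 5) \<cdot>\<^sub>v unit_vec (2 ^ d) 0, (4 * r / 5) \<cdot>\<^sub>v unit_vec (2 ^ d) 1}"
  shows "point_cloud d X" "card X = 2"
    and "distortion X eucl_dist bures_dist amp_enc = \<bar>r - 1\<bar>"
    and "diam_fin (amp_enc ` X) bures_dist = 1"
proof -
  have idx: "0 < (2::nat) ^ d" "1 < (2::nat) ^ d"
    using assms(1) one_less_power[of "2::nat" d] by simp_all
  have "sqrt ((3 * r / 5)\<^sup>2 + (4 * r / 5)\<^sup>2) = r"
    using assms(2) by (simp add: power2_eq_square field_simps)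
  then show "point_cloud d X" "card X = 2"
    and "distortion X eucl_dist bures_dist amp_enc = \<bar>r - 1\<bar>"
    and "diam_fin (amp_enc ` X) bures_dist = 1"
    unfolding X_def using assms(2) idx
    by (simp_all add: point_cloud_smult_unit_vec_pair card_smult_unit_vec_pair
        distortion_orthogonal_pair diam_fin_amp_enc_orthogonal_pair del: image_insert)
qed

lemma parallel_pair_cloud:
  fixes r :: real and d :: nat
  assumes "0 < r"
  defines "X \<equiv> {r \<cdot>\<^sub>v unit_vec (2 ^ d) 0, (2 * r) \<cdot>\<^sub>v unit_vec (2 ^ d) 0}"
  shows "point_cloud d X" "card X = 2"
    and "distortion X eucl_dist bures_dist amp_enc = r"
    and "sf_distortion X eucl_dist bures_dist amp_enc = r"
    and "diam_fin X eucl_dist = r"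
  unfolding X_def using assms
  by (simp_all add: point_cloud_smult_unit_vec_pair card_smult_unit_vec_pair
      distortion_parallel_pair sf_distortion_parallel_pair diam_fin_parallel_pair)

theorem mainTheorem1:
  fixes d :: nat
  assumes "d \<ge> 1"
  shows
   "(\<forall>X. point_cloud d X \<longrightarrow>
        0 \<le> distortion X eucl_dist bures_dist amp_enc \<and>
        distortion X eucl_dist bures_dist amp_enc
          \<le> max (diam_fin X eucl_dist) (diam_fin (amp_enc ` X) bures_dist))
    \<and> (\<exists>X. point_cloud d X \<and> distortion X eucl_dist bures_dist amp_enc = 0)
    \<and> (\<exists>X. point_cloud d X \<and> distortion X eucl_dist bures_dist amp_enc = diam_fin X eucl_dist)
    \<and> (\<exists>N::nat. \<forall>\<epsilon>::real. 0 < \<epsilon> \<and> \<epsilon> < 1 \<longrightarrow>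
         (\<exists>X. point_cloud d X \<and> card X = N \<and>
              distortion X eucl_dist bures_dist amp_enc
                = diam_fin (amp_enc ` X) bures_dist - \<epsilon>))
    \<and> (\<forall>X. point_cloud d X \<longrightarrow>
        0 \<le> sf_distortion X eucl_dist bures_dist amp_enc \<and>
        sf_distortion X eucl_dist bures_dist amp_enc
          \<le> max (diam_fin X eucl_dist) (diam_fin (amp_enc ` X) bures_dist))
    \<and> (\<exists>X. point_cloud d X \<and> sf_distortion X eucl_dist bures_dist amp_enc = 0)
    \<and> (\<exists>X. point_cloud d X \<and> sf_distortion X eucl_dist bures_dist amp_enc = diam_fin X eucl_dist)
    \<and> (\<exists>Xs :: nat \<Rightarrow> real vec set.
         (\<forall>n. point_cloud d (Xs n)) \<and> (\<exists>c. \<forall>n. card (Xs n) = c) \<and>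
         filterlim (\<lambda>n. sf_distortion (Xs n) eucl_dist bures_dist amp_enc) at_top sequentially)"
proof -
  let ?orth = "\<lambda>r::real. {(3 * r / 5) \<cdot>\<^sub>v unit_vec (2 ^ d) 0, (4 * r / 5) \<cdot>\<^sub>v unit_vec (2 ^ d) 1}"
  let ?par = "\<lambda>r::real. {r \<cdot>\<^sub>v unit_vec (2 ^ d) 0, (2 * r) \<cdot>\<^sub>v unit_vec (2 ^ d) 0}"
  note orth = orthogonal_pair_cloud[OF assms] and par = parallel_pair_cloud
  have sf_orth: "sf_distortion (?orth 1) eucl_dist bures_dist amp_enc = 0"
    using orth(3)[of 1] point_cloud_sf_distortion_bounds[OF orth(1)[of 1]]
      sf_distortion_nonneg_le_distortion[of "?orth 1" eucl_dist bures_dist amp_enc] by simp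
  have "filterlim (\<lambda>k. real (Suc k)) at_top sequentially"
    using filterlim_real_sequentially by (subst filterlim_sequentially_Suc)
  then have lim: "filterlim (\<lambda>k. sf_distortion (?par (real (Suc k))) eucl_dist bures_dist amp_enc)
      at_top sequentially"
    by (simp only: par(4) of_nat_0_less_iff zero_less_Suc)
  show ?thesis
  proof (intro conjI)
    show "\<exists>X. point_cloud d X \<and> distortion X eucl_dist bures_dist amp_enc = 0"
      using orth(1,3)[of 1] by force
    show "\<exists>X. point_cloud d X \<and> sf_distortion X eucl_dist bures_dist amp_enc = 0"
      using orth(1)[of 1] sf_orth by force
    show "\<exists>X. point_cloud d X \<and> distortion X eucl_dist bures_dist amp_enc = diam_fin X eucl_dist"
      using par(1,3,5)[of 1] by force
    show "\<exists>X. point_cloud d X \<and> sf_distortion X eucl_dist bures_dist amp_enc = diam_fin X eucl_dist"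
      using par(1,4,5)[of 1] by force
    show "\<exists>N::nat. \<forall>\<epsilon>::real. 0 < \<epsilon> \<and> \<epsilon> < 1 \<longrightarrow>
        (\<exists>X. point_cloud d X \<and> card X = N \<and>
          distortion X eucl_dist bures_dist amp_enc = diam_fin (amp_enc ` X) bures_dist - \<epsilon>)"
      using orth by (intro exI[of _ 2] allI impI) (rule exI, auto)
    show "\<exists>Xs. (\<forall>n. point_cloud d (Xs n)) \<and> (\<exists>c. \<forall>n. card (Xs n) = c) \<and>
        filterlim (\<lambda>n. sf_distortion (Xs n) eucl_dist bures_dist amp_enc) at_top sequentially"
      using par(1,2)[where r = "real (Suc k)" for k] lim
      by (intro exI[of _ "\<lambda>k. ?par (real (Suc k))"] conjI allI exI[of _ 2]) auto
  qed (use point_cloud_distortion_bounds point_cloud_sf_distortion_bounds in blast)+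
qed

end
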